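(* Let $p$ be a prime, $k\ge 1$, and let $M,H$ be invertible $k\times k$ matrices over $\mathbb{F}_p$. Let $m,n$ be positive integers and define \[A=\sum_{i=0}^{m-1} H^iMH^i,\qquad B=\sum_{i=0}^{n-1} H^iMH^i,\qquad K=\sum_{i=0}^{m+n-1} H^iMH^i.\] Suppose $R$ and $S$ are $k\times k$ matrices over $\mathbb{F}_p$ which commute with $H$ and satisfy \[RMS = HAH + M - A.\] Then $RBS + A = K$.
   Context: This arises from the MAKE key exchange protocol over the semidirect product of the additive semigroup and multiplicative semigroup of $k\times k$ matrices over $\mathbb{F}_p$, with product $(G_1,H_1)\cdot(G_2,H_2)=(H_2G_1H_2+G_2,H_1H_2)$. In it, $A$ and $B$ are the first components of $(M,H)^m$ and $(M,H)^n$ (Alice's and Bob's public keys), and $K$ is the shared secret key $H^mBH^m+A=H^nAH^n+B$. *)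

theory Defs
  imports "HOL-Analysis.Analysis"
begin

primrec matpow :: "'a::semiring_1 ^'n^'n \<Rightarrow> nat \<Rightarrow> 'a^'n^'n" where
  "matpow A 0 = mat 1"
| "matpow A (Suc j) = A ** matpow A j"

end

theory Submission
  imports Defs
begin

text \<open>
  Write \<open>f i = H\<^sup>i M H\<^sup>i\<close>, so that \<open>H (f i) H = f (i + 1)\<close>. Then \<open>H A H - A\<close> telescopes to
  \<open>f m - M\<close>, and the hypothesis on \<open>R M S\<close> says exactly \<open>R M S = f m\<close>. Since \<open>R\<close> and \<open>S\<close> commute
  with every power of \<open>H\<close>, \<open>R (f i) S = H\<^sup>i (R M S) H\<^sup>i = f (i + m)\<close>, so \<open>R B S\<close> is the sum of the
  terms \<open>f m, \<dots>, f (m + n - 1)\<close>, i.e. \<open>K - A\<close>.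
\<close>

lemma matrix_add_rdistrib:
  fixes A B :: "'a::semiring_1^'n^'m" and C :: "'a^'p^'n"
  shows "(A + B) ** C = A ** C + B ** C"
  by (simp add: matrix_matrix_mult_def vec_eq_iff sum.distrib distrib_right)

lemma matrix_mul_sum_left:
  fixes A :: "'a::semiring_1^'n^'m" and f :: "'i \<Rightarrow> 'a^'p^'n"
  shows "A ** (\<Sum>i\<in>I. f i) = (\<Sum>i\<in>I. A ** f i)"
  by (induction I rule: infinite_finite_induct) (simp_all add: matrix_add_ldistrib)

lemma matrix_mul_sum_right:
  fixes A :: "'a::semiring_1^'p^'n" and f :: "'i \<Rightarrow> 'a^'n^'m"
  shows "(\<Sum>i\<in>I. f i) ** A = (\<Sum>i\<in>I. f i ** A)"
  by (induction I rule: infinite_finite_induct) (simp_all add: matrix_add_rdistrib)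

lemma matpow_commute:
  fixes X H :: "'a::semiring_1^'n^'n"
  assumes "X ** H = H ** X"
  shows "X ** matpow H i = matpow H i ** X"
proof (induction i)
  case 0
  show ?case by simp
next
  case (Suc i)
  have "X ** matpow H (Suc i) = H ** (X ** matpow H i)"
    by (simp add: assms matrix_mul_assoc)
  also have "\<dots> = matpow H (Suc i) ** X"
    by (simp add: Suc matrix_mul_assoc)
  finally show ?case .
qed

lemma matpow_Suc_right:
  fixes H :: "'a::semiring_1^'n^'n"
  shows "matpow H (Suc i) = matpow H i ** H"
  using matpow_commute[of H H i] by simp

lemma matpow_add:
  fixes H :: "'a::semiring_1^'n^'n"
  shows "matpow H (i + j) = matpow H i ** matpow H j"
  by (induction i) (simp_all add: matrix_mul_assoc)

lemma matpow_sandwich_Suc: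
  fixes H X :: "'a::semiring_1^'n^'n"
  shows "H ** (matpow H i ** X ** matpow H i) ** H = matpow H (Suc i) ** X ** matpow H (Suc i)"
  by (subst (2) matpow_Suc_right) (simp add: matrix_mul_assoc)

lemma matpow_sandwich_add:
  fixes H X :: "'a::semiring_1^'n^'n"
  shows "matpow H i ** (matpow H j ** X ** matpow H j) ** matpow H i
           = matpow H (i + j) ** X ** matpow H (i + j)"
  by (simp add: matpow_add matrix_mul_assoc)
     (simp add: matpow_add[symmetric] add.commute flip: matrix_mul_assoc)

lemma sandwich_sum_telescope:
  fixes H M :: "'a::ring_1^'n^'n"
  shows "H ** (\<Sum>i<m. matpow H i ** M ** matpow H i) ** H - (\<Sum>i<m. matpow H i ** M ** matpow H i)
           = matpow H m ** M ** matpow H m - M"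
proof -
  let ?f = "\<lambda>i. matpow H i ** M ** matpow H i"
  have "H ** (\<Sum>i<m. ?f i) ** H - (\<Sum>i<m. ?f i) = (\<Sum>i<m. ?f (Suc i) - ?f i)"
    by (simp add: matrix_mul_sum_left matrix_mul_sum_right matpow_sandwich_Suc sum_subtractf)
  also have "\<dots> = ?f m - ?f 0"
    by (rule sum_lessThan_telescope)
  finally show ?thesis by simp
qed

lemma commuting_sandwich_matpow:
  fixes R S H X :: "'a::semiring_1^'n^'n"
  assumes "R ** H = H ** R" and "S ** H = H ** S"
  shows "R ** (matpow H i ** X ** matpow H i) ** S = matpow H i ** (R ** X ** S) ** matpow H i"
proof -
  have "R ** (matpow H i ** X ** matpow H i) ** S = (R ** matpow H i) ** X ** (matpow H i ** S)"
    by (simp add: matrix_mul_assoc)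
  also have "\<dots> = (matpow H i ** R) ** X ** (S ** matpow H i)"
    by (simp only: matpow_commute[OF assms(1)] matpow_commute[OF assms(2)])
  also have "\<dots> = matpow H i ** (R ** X ** S) ** matpow H i"
    by (simp add: matrix_mul_assoc)
  finally show ?thesis .
qed

lemma sum_lessThan_add_split:
  fixes f :: "nat \<Rightarrow> 'a::comm_monoid_add"
  shows "(\<Sum>i<m + n. f i) = (\<Sum>i<m. f i) + (\<Sum>i<n. f (i + m))"
  by (induction n) (simp_all add: add_ac)

theorem lemma3p1:
  fixes p :: nat
    and M H R S :: "'a::{field,finite} ^'k::finite^'k"
    and m n :: nat
  assumes "prime p" and "CARD('a) = p"
    and "invertible M" and "invertible H"
    and "m > 0" and "n > 0"
    and "R ** H = H ** R" and "S ** H = H ** S"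
    and "R ** M ** S =
           H ** (\<Sum>i<m. matpow H i ** M ** matpow H i) ** H + M
           - (\<Sum>i<m. matpow H i ** M ** matpow H i)"
  shows "R ** (\<Sum>i<n. matpow H i ** M ** matpow H i) ** S
           + (\<Sum>i<m. matpow H i ** M ** matpow H i)
         = (\<Sum>i<m+n. matpow H i ** M ** matpow H i)"
proof -
  define f where "f i = matpow H i ** M ** matpow H i" for i
  have RMS: "R ** M ** S = f m"
    using assms(9) sandwich_sum_telescope[of H M m] by (simp add: f_def algebra_simps)
  have "R ** (\<Sum>i<n. f i) ** S = (\<Sum>i<n. f (i + m))"
    by (simp add: matrix_mul_sum_left matrix_mul_sum_right f_def
        commuting_sandwich_matpow[OF assms(7,8)] RMS[unfolded f_def] matpow_sandwich_add)
  then show ?thesis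
    unfolding f_def[symmetric] by (simp add: sum_lessThan_add_split add.commute)
qed

end
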